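(* $I(\hat R_A;\hat H_B)=I(\hat R_A;\hat R_B)$, and symmetrically $I(\hat H_A;\hat R_B)=I(\hat R_A;\hat R_B)$. That is, if one party uses the envelope of its observation, the other party loses no information by also taking the envelope of its own observation.
   Context: Fix $p>0$ and $\sigma_A^2,\sigma_B^2>0$. Let $H$ be a zero-mean circularly-symmetric complex Gaussian (ZMCSCG) variable of variance $p$, and $W_A,W_B$ ZMCSCG with variances $\sigma_A^2,\sigma_B^2$, mutually independent and independent of $H$. Define $\hat H_A=H+W_A$, $\hat H_B=H+W_B$, and envelopes $\hat R_A=|\hat H_A|$, $\hat R_B=|\hat H_B|$. Mutual information is in bits. *)

theory Defs
  imports "HOL-Probability.Probability"
begin

text \<open>Zero-mean circularly-symmetric complex Gaussian with variance v = E|X|^2: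
  density exp(-|z|^2/v)/(pi v) w.r.t. Lebesgue measure on the complex plane.\<close>
definition ZMCSCG :: "'a measure \<Rightarrow> real \<Rightarrow> ('a \<Rightarrow> complex) \<Rightarrow> bool" where
  "ZMCSCG M v X \<longleftrightarrow>
     distributed M lborel X (\<lambda>z. ennreal (exp (- (cmod z)\<^sup>2 / v) / (pi * v)))"

end

theory Submission
  imports Defs
begin

text \<open>
  Let \<open>A\<close> be any observation and \<open>Z\<close> a complex one such that the joint law of \<open>(A, Z)\<close> is
  invariant under rotating \<open>Z\<close>. Then \<open>(A, Z)\<close> has the law of \<open>(A, |Z| \<Theta>)\<close> with \<open>\<Theta>\<close> a
  uniform phase independent of \<open>(A, |Z|)\<close>, and the same holds for the product of the marginals.
  So the envelope \<open>|Z|\<close> is a sufficient statistic for both measures, and their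
  Kullback-Leibler divergence, the mutual information \<open>I(A; Z)\<close>, equals \<open>I(A; |Z|)\<close>.
  For \<open>A = |H + W\<^sub>A|\<close> and \<open>Z = H + W\<^sub>B\<close> the invariance holds because multiplying the
  independent circularly symmetric \<open>H, W\<^sub>A, W\<^sub>B\<close> by a common unit complex number preserves
  their joint law, fixes \<open>A\<close> and rotates \<open>Z\<close>. The second identity follows by symmetry
  of mutual information.
\<close>

section \<open>Rotation invariance of Lebesgue measure on the complex plane\<close>

lemma measurable_Complex_pair [measurable]:
  "(\<lambda>(x, y). Complex x y) \<in> borel_measurable (borel \<Otimes>\<^sub>M borel)"
proof -
  have "(\<lambda>(x, y). Complex x y) = (\<lambda>p. complex_of_real (fst p) + \<i> * complex_of_real (snd p))"
    by (auto simp: fun_eq_iff complex_eq_iff)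
  then show ?thesis by simp
qed

lemma distr_Complex_lborel:
  "distr (lborel \<Otimes>\<^sub>M lborel) borel (\<lambda>(x, y). Complex x y) = (lborel :: complex measure)"
proof (rule lborel_eqI[symmetric])
  fix l u :: complex
  assume lu: "\<And>b. b \<in> Basis \<Longrightarrow> l \<bullet> b \<le> u \<bullet> b"
  then have "Re l \<le> Re u" "Im l \<le> Im u"
    using lu[of 1] lu[of \<i>] by (auto simp: inner_complex_def)
  moreover have "(\<lambda>(x, y). Complex x y) -` box l u \<inter> space (lborel \<Otimes>\<^sub>M lborel)
      = {Re l<..<Re u} \<times> {Im l<..<Im u}"
    by (auto simp: box_def Basis_complex_def inner_complex_def space_pair_measure)
  ultimately show "emeasure (distr (lborel \<Otimes>\<^sub>M lborel) borel (\<lambda>(x, y). Complex x y)) (box l u)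
      = (\<Prod>b\<in>Basis. (u - l) \<bullet> b)"
    by (simp add: emeasure_distr lborel.emeasure_pair_measure_Times Basis_complex_def
        inner_complex_def ennreal_mult)
qed simp

lemma lborel_pair_shear_snd:
  fixes f :: "real \<Rightarrow> real"
  assumes [measurable]: "f \<in> borel_measurable borel"
  shows "distr (lborel \<Otimes>\<^sub>M lborel) (lborel \<Otimes>\<^sub>M lborel) (\<lambda>(x, y). (x, y + f x))
    = lborel \<Otimes>\<^sub>M lborel" (is "distr ?L ?L ?f = ?L")
proof (rule measure_eqI)
  fix A assume "A \<in> sets (distr ?L ?L ?f)"
  then have A: "A \<in> sets ?L" by simp
  have f: "?f \<in> measurable ?L ?L" by measurable
  have slice: "emeasure lborel (Pair x -` (?f -` A \<inter> space ?L)) = emeasure lborel (Pair x -` A)"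
    for x
  proof -
    have "Pair x -` A \<in> sets borel"
      using sets_Pair1[OF A] by simp
    then have "emeasure lborel (Pair x -` A)
        = emeasure lborel ((+) (f x) -` (Pair x -` A) \<inter> space lborel)"
      by (subst lborel_distr_plus[of "f x", symmetric]) (simp add: emeasure_distr)
    also have "(+) (f x) -` (Pair x -` A) \<inter> space lborel = Pair x -` (?f -` A \<inter> space ?L)"
      by (auto simp: space_pair_measure add.commute)
    finally show ?thesis ..
  qed
  have "emeasure (distr ?L ?L ?f) A = emeasure ?L (?f -` A \<inter> space ?L)"
    by (rule emeasure_distr[OF f A])
  also have "\<dots> = (\<integral>\<^sup>+x. emeasure lborel (Pair x -` A) \<partial>lborel)"
    by (simp only: lborel.emeasure_pair_measure_alt[OF measurable_sets[OF f A]] slice)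
  also have "\<dots> = emeasure ?L A"
    using A by (simp add: lborel.emeasure_pair_measure_alt)
  finally show "emeasure (distr ?L ?L ?f) A = emeasure ?L A" .
qed simp

lemma lborel_pair_shear_fst:
  fixes f :: "real \<Rightarrow> real"
  assumes [measurable]: "f \<in> borel_measurable borel"
  shows "distr (lborel \<Otimes>\<^sub>M lborel) (lborel \<Otimes>\<^sub>M lborel) (\<lambda>(x, y). (x + f y, y))
    = lborel \<Otimes>\<^sub>M lborel" (is "distr ?L ?L ?f = ?L")
proof -
  let ?swap = "\<lambda>(x :: real, y :: real). (y, x)" and ?g = "\<lambda>(x, y). (x, y + f x)"
  have swap: "distr ?L ?L ?swap = ?L"
    by (rule lborel_pair.distr_pair_swap[symmetric])
  have "?f = ?swap \<circ> ?g \<circ> ?swap" by auto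
  then have "distr ?L ?L ?f = distr (distr (distr ?L ?L ?swap) ?L ?g) ?L ?swap"
    by (simp add: distr_distr comp_assoc)
  then show ?thesis by (simp add: swap lborel_pair_shear_snd)
qed

lemma lborel_pair_rotation:
  fixes c s :: real
  assumes unit: "c\<^sup>2 + s\<^sup>2 = 1" and "c \<noteq> -1"
  shows "distr (lborel \<Otimes>\<^sub>M lborel) (lborel \<Otimes>\<^sub>M lborel) (\<lambda>(x, y). (c*x - s*y, s*x + c*y))
    = lborel \<Otimes>\<^sub>M lborel" (is "distr ?L ?L ?rot = ?L")
proof -
  define t where "t = s / (1 + c)"
  have "1 + c \<noteq> 0" using \<open>c \<noteq> -1\<close> by linarith
  then have ts: "t * s = 1 - c" and tc: "t * (1 + c) = s"
    using unit by (auto simp: t_def field_simps power2_eq_square)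
  let ?f = "\<lambda>(x, y). (x + (- t) * y, y)" and ?g = "\<lambda>(x, y). (x, y + s * x)"
  \<comment> \<open>the rotation by \<open>\<theta>\<close> is the product of shears by \<open>-tan(\<theta>/2)\<close>, \<open>sin \<theta>\<close>, \<open>-tan(\<theta>/2)\<close>\<close>
  have "?rot (x, y) = (?f \<circ> ?g \<circ> ?f) (x, y)" for x y
  proof -
    have "x - t * y - t * (y + s * (x - t * y)) = (1 - t * s) * x - t * (1 + (1 - t * s)) * y"
      "y + s * (x - t * y) = s * x + (1 - t * s) * y"
      by (simp_all add: algebra_simps)
    then show ?thesis
      by (simp add: ts tc)
  qed
  then have "?rot = ?f \<circ> ?g \<circ> ?f"
    by (simp add: fun_eq_iff split_paired_all)
  then have "distr ?L ?L ?rot = distr (distr (distr ?L ?L ?f) ?L ?g) ?L ?f"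
    by (simp add: distr_distr comp_assoc)
  moreover have "distr ?L ?L ?f = ?L"
    by (rule lborel_pair_shear_fst) simp
  moreover have "distr ?L ?L ?g = ?L"
    by (rule lborel_pair_shear_snd) simp
  ultimately show ?thesis
    by simp
qed

lemma lborel_distr_rotation:
  fixes u :: complex
  assumes "cmod u = 1"
  shows "distr lborel borel ((*) u) = lborel"
proof (cases "u = -1")
  case True
  then have "(*) u = (\<lambda>z. 0 + (-1) *\<^sub>R z)" by auto
  then show ?thesis
    using lborel_affine[of "-1" "0 :: complex"] by (simp add: density_1)
next
  case False
  let ?L = "lborel \<Otimes>\<^sub>M lborel :: (real \<times> real) measure" and ?C = "\<lambda>(x, y). Complex x y"
  let ?rot = "\<lambda>(x, y). (Re u * x - Im u * y, Im u * x + Re u * y)"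
  have unit: "(Re u)\<^sup>2 + (Im u)\<^sup>2 = 1"
    using assms by (simp add: cmod_def)
  moreover have "Re u \<noteq> -1"
    using False unit by (auto simp: complex_eq_iff power2_eq_square)
  ultimately have rot: "distr ?L ?L ?rot = ?L"
    by (rule lborel_pair_rotation)
  have "(*) u \<circ> ?C = ?C \<circ> ?rot"
    by (auto simp: fun_eq_iff complex_eq_iff algebra_simps)
  then have "distr (distr ?L borel ?C) borel ((*) u) = distr (distr ?L ?L ?rot) borel ?C"
    by (simp add: distr_distr)
  then show ?thesis
    by (simp only: rot distr_Complex_lborel)
qed

lemma distr_density_rotation:
  fixes g :: "complex \<Rightarrow> ennreal"
  assumes "cmod u = 1" and g: "g \<in> borel_measurable borel" and "\<And>z. g (u * z) = g z"
  shows "distr (density lborel g) borel ((*) u) = density lborel g"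
proof -
  have "density (distr lborel borel ((*) u)) g = distr (density lborel (\<lambda>z. g (u * z))) borel ((*) u)"
    by (rule density_distr) (use g in auto)
  moreover have "(\<lambda>z. g (u * z)) = g"
    using assms(3) by (simp add: fun_eq_iff)
  ultimately show ?thesis
    by (simp only: lborel_distr_rotation[OF assms(1)])
qed

lemma ZMCSCG_distr:
  assumes "ZMCSCG M v X"
  shows "distr M borel X = density lborel (\<lambda>z. ennreal (exp (- (cmod z)\<^sup>2 / v) / (pi * v)))"
    and "X \<in> borel_measurable M"
proof -
  from assms have "distr M lborel X = density lborel (\<lambda>z. ennreal (exp (- (cmod z)\<^sup>2 / v) / (pi * v)))"
    and X: "X \<in> measurable M lborel"
    unfolding ZMCSCG_def distributed_def by auto
  moreover have "distr M borel X = distr M lborel X"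
    by (rule distr_cong) auto
  ultimately show "distr M borel X = density lborel (\<lambda>z. ennreal (exp (- (cmod z)\<^sup>2 / v) / (pi * v)))"
    by simp
  show "X \<in> borel_measurable M"
    using X by simp
qed

lemma ZMCSCG_distr_rotation:
  assumes "ZMCSCG M v X" and "cmod u = 1"
  shows "distr M borel (\<lambda>\<omega>. u * X \<omega>) = distr M borel X"
proof -
  have X: "X \<in> borel_measurable M"
    using assms(1) by (rule ZMCSCG_distr)
  have "distr M borel (\<lambda>\<omega>. u * X \<omega>) = distr (distr M borel X) borel ((*) u)"
    using distr_distr[of "(*) u" borel borel X M] X by (simp add: comp_def)
  also have "\<dots> = distr M borel X"
    unfolding ZMCSCG_distr(1)[OF assms(1)] using assms(2)
    by (intro distr_density_rotation) (auto simp: norm_mult)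
  finally show ?thesis .
qed

lemma ZMCSCG_AE_nonzero:
  assumes "ZMCSCG M v X"
  shows "AE \<omega> in M. X \<omega> \<noteq> 0"
proof -
  have "AE z in density lborel (\<lambda>z. ennreal (exp (- (cmod z)\<^sup>2 / v) / (pi * v))). z \<noteq> 0"
    using AE_lborel_singleton[of 0] by (subst AE_density) auto
  then have "AE z in distr M borel X. z \<noteq> 0"
    by (simp only: ZMCSCG_distr(1)[OF assms])
  then show ?thesis
    using ZMCSCG_distr(2)[OF assms] by (subst (asm) AE_distr_iff) auto
qed

lemma (in prob_space) indep_vars_distr_compose_eq:
  assumes indep: "indep_vars N X I" and "I \<noteq> {}"
    and f: "\<And>i. i \<in> I \<Longrightarrow> f i \<in> measurable (N i) (N i)"
    and law: "\<And>i. i \<in> I \<Longrightarrow> distr M (N i) (\<lambda>\<omega>. f i (X i \<omega>)) = distr M (N i) (X i)"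
  shows "distr M (\<Pi>\<^sub>M i\<in>I. N i) (\<lambda>\<omega>. \<lambda>i\<in>I. f i (X i \<omega>))
    = distr M (\<Pi>\<^sub>M i\<in>I. N i) (\<lambda>\<omega>. \<lambda>i\<in>I. X i \<omega>)"
proof -
  have X: "\<And>i. i \<in> I \<Longrightarrow> random_variable (N i) (X i)"
    using indep by (auto simp: indep_vars_def)
  have "indep_vars N (\<lambda>i. f i \<circ> X i) I"
    using indep f by (rule indep_vars_compose)
  then have "distr M (\<Pi>\<^sub>M i\<in>I. N i) (\<lambda>\<omega>. \<lambda>i\<in>I. f i (X i \<omega>))
      = (\<Pi>\<^sub>M i\<in>I. distr M (N i) (\<lambda>\<omega>. f i (X i \<omega>)))"
    using \<open>I \<noteq> {}\<close> X f by (subst (asm) indep_vars_iff_distr_eq_PiM') (auto simp: comp_def)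
  also have "\<dots> = (\<Pi>\<^sub>M i\<in>I. distr M (N i) (X i))"
    by (rule PiM_cong) (simp_all add: law)
  also have "\<dots> = distr M (\<Pi>\<^sub>M i\<in>I. N i) (\<lambda>\<omega>. \<lambda>i\<in>I. X i \<omega>)"
    using indep \<open>I \<noteq> {}\<close> X by (subst (asm) indep_vars_iff_distr_eq_PiM') auto
  finally show ?thesis .
qed

lemma (in prob_space) indep_vars_distr_equivariant:
  assumes indep: "indep_vars (\<lambda>_. borel) X I" and "I \<noteq> {}"
    and g: "g \<in> borel_measurable borel"
    and law: "\<And>i. i \<in> I \<Longrightarrow> distr M borel (\<lambda>\<omega>. g (X i \<omega>)) = distr M borel (X i)"
    and F: "F \<in> measurable (\<Pi>\<^sub>M i\<in>I. borel) K" and R: "R \<in> measurable K K"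
    and equivariant: "\<And>x. R (F x) = F (\<lambda>i\<in>I. g (x i))"
  shows "distr (distr M K (\<lambda>\<omega>. F (\<lambda>i\<in>I. X i \<omega>))) K R = distr M K (\<lambda>\<omega>. F (\<lambda>i\<in>I. X i \<omega>))"
proof -
  have Xi: "\<And>i. i \<in> I \<Longrightarrow> X i \<in> borel_measurable M"
    using indep by (auto simp: indep_vars_def)
  then have X: "(\<lambda>\<omega>. \<lambda>i\<in>I. X i \<omega>) \<in> measurable M (\<Pi>\<^sub>M i\<in>I. borel)"
    and gX: "(\<lambda>\<omega>. \<lambda>i\<in>I. g (X i \<omega>)) \<in> measurable M (\<Pi>\<^sub>M i\<in>I. borel)"
    using g by (auto intro!: measurable_restrict)
  have "distr (distr M K (\<lambda>\<omega>. F (\<lambda>i\<in>I. X i \<omega>))) K R = distr M K (\<lambda>\<omega>. F (\<lambda>i\<in>I. g (X i \<omega>)))"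
    using F R X by (simp add: distr_distr comp_def equivariant cong: restrict_cong)
  also have "\<dots> = distr (distr M (\<Pi>\<^sub>M i\<in>I. borel) (\<lambda>\<omega>. \<lambda>i\<in>I. g (X i \<omega>))) K F"
    using F gX by (simp add: distr_distr comp_def)
  also have "distr M (\<Pi>\<^sub>M i\<in>I. borel) (\<lambda>\<omega>. \<lambda>i\<in>I. g (X i \<omega>))
      = distr M (\<Pi>\<^sub>M i\<in>I. borel) (\<lambda>\<omega>. \<lambda>i\<in>I. X i \<omega>)"
    using indep \<open>I \<noteq> {}\<close> g by (rule indep_vars_distr_compose_eq) (simp_all add: law)
  also have "distr \<dots> K F = distr M K (\<lambda>\<omega>. F (\<lambda>i\<in>I. X i \<omega>))"
    using F X by (simp add: distr_distr comp_def)
  finally show ?thesis .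
qed

lemma (in sigma_finite_measure) distr_pair_measure_fiberwise_eq:
  assumes f: "f \<in> measurable (N \<Otimes>\<^sub>M M) K" and g: "g \<in> measurable (N \<Otimes>\<^sub>M M) K"
    and fiber: "\<And>x. x \<in> space N \<Longrightarrow> distr M K (\<lambda>y. f (x, y)) = distr M K (\<lambda>y. g (x, y))"
  shows "distr (N \<Otimes>\<^sub>M M) K f = distr (N \<Otimes>\<^sub>M M) K g"
proof (rule measure_eqI)
  fix A assume "A \<in> sets (distr (N \<Otimes>\<^sub>M M) K f)"
  then have A: "A \<in> sets K" by simp
  have slice: "emeasure (N \<Otimes>\<^sub>M M) (h -` A \<inter> space (N \<Otimes>\<^sub>M M))
      = (\<integral>\<^sup>+x. emeasure (distr M K (\<lambda>y. h (x, y))) A \<partial>N)"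
    if h: "h \<in> measurable (N \<Otimes>\<^sub>M M) K" for h
  proof -
    have "Pair x -` (h -` A \<inter> space (N \<Otimes>\<^sub>M M)) = (\<lambda>y. h (x, y)) -` A \<inter> space M"
      if "x \<in> space N" for x
      using that by (auto simp: space_pair_measure)
    then show ?thesis
      using measurable_sets[OF h A] h A
      by (auto simp: emeasure_pair_measure_alt emeasure_distr intro!: nn_integral_cong)
  qed
  show "emeasure (distr (N \<Otimes>\<^sub>M M) K f) A = emeasure (distr (N \<Otimes>\<^sub>M M) K g) A"
    using f g A by (simp add: emeasure_distr slice fiber cong: nn_integral_cong)
qed simp

lemma (in prob_space) distr_pair_measure_invariant:
  assumes "sigma_finite_measure N" and sets_N: "sets N = sets K" and f: "f \<in> measurable (N \<Otimes>\<^sub>M M) K"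
    and invariant: "AE y in M. distr N K (\<lambda>x. f (x, y)) = N"
  shows "distr (N \<Otimes>\<^sub>M M) K f = N"
proof (rule measure_eqI)
  interpret pair_sigma_finite N M
    using assms(1) by (simp add: pair_sigma_finite_def sigma_finite_measure_axioms)
  fix A assume "A \<in> sets (distr (N \<Otimes>\<^sub>M M) K f)"
  then have A: "A \<in> sets K" by simp
  have "(\<lambda>x. (x, y)) -` (f -` A \<inter> space (N \<Otimes>\<^sub>M M)) = (\<lambda>x. f (x, y)) -` A \<inter> space N"
    if "y \<in> space M" for y
    using that by (auto simp: space_pair_measure)
  then have "emeasure (distr (N \<Otimes>\<^sub>M M) K f) A = (\<integral>\<^sup>+y. emeasure (distr N K (\<lambda>x. f (x, y))) A \<partial>M)"
    using measurable_sets[OF f A] f A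
    by (auto simp: emeasure_distr emeasure_pair_measure_alt2 intro!: nn_integral_cong)
  also have "\<dots> = (\<integral>\<^sup>+y. emeasure N A \<partial>M)"
    by (rule nn_integral_cong_AE) (use invariant in auto)
  also have "\<dots> = emeasure N A"
    by (simp add: emeasure_space_1)
  finally show "emeasure (distr (N \<Otimes>\<^sub>M M) K f) A = emeasure N A" .
qed (use sets_N in simp)

lemma (in sigma_finite_measure) distr_pair_measure_distr_fst:
  assumes T: "T \<in> measurable N K" and S: "S \<in> measurable (K \<Otimes>\<^sub>M M) L"
  shows "distr (distr N K T \<Otimes>\<^sub>M M) L S = distr (N \<Otimes>\<^sub>M M) L (\<lambda>(x, y). S (T x, y))"
proof -
  have "distr N K T \<Otimes>\<^sub>M M = distr (N \<Otimes>\<^sub>M M) (K \<Otimes>\<^sub>M M) (\<lambda>(x, y). (T x, y))"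
    using pair_measure_distr[OF T measurable_ident, of M] sigma_finite_measure_axioms
    by (simp add: id_def)
  moreover have "(\<lambda>(x, y). (T x, y)) \<in> measurable (N \<Otimes>\<^sub>M M) (K \<Otimes>\<^sub>M M)"
    using T by measurable
  ultimately show ?thesis
    using S by (simp add: distr_distr comp_def split_beta')
qed

text \<open>By uniqueness of Haar measure, such a \<open>G\<close> is the uniform distribution on the unit circle.\<close>
definition uniform_phase :: "complex measure \<Rightarrow> bool" where
  "uniform_phase G \<longleftrightarrow> prob_space G \<and> sets G = sets borel \<and> (AE w in G. cmod w = 1)
     \<and> (\<forall>u. cmod u = 1 \<longrightarrow> distr G borel ((*) u) = G)"

lemma uniform_phase_distr_mult:
  assumes G: "uniform_phase G" and \<phi>: "\<phi> \<in> measurable borel L"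
  shows "distr G L (\<lambda>w. \<phi> (complex_of_real (cmod h) * w)) = distr G L (\<lambda>w. \<phi> (h * w))"
proof (cases "h = 0")
  case False
  have measurable_G: "measurable G = measurable borel"
    using G by (intro ext measurable_cong_sets) (auto simp: uniform_phase_def)
  have h: "complex_of_real (cmod h) * (sgn h * w) = h * w" for w
    using False by (simp add: complex_sgn_def scaleR_conv_of_real)
  have "cmod (sgn h) = 1"
    using False by (simp add: norm_sgn)
  then have "distr G L (\<lambda>w. \<phi> (complex_of_real (cmod h) * w))
      = distr (distr G borel ((*) (sgn h))) L (\<lambda>w. \<phi> (complex_of_real (cmod h) * w))"
    using G by (simp add: uniform_phase_def)
  also have "\<dots> = distr G L (\<lambda>w. \<phi> (h * w))"
    using \<phi> by (subst distr_distr) (simp_all add: measurable_G comp_def h)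
  finally show ?thesis .
qed simp

lemma (in prob_space) uniform_phase_distr_sgn:
  assumes [measurable]: "Z \<in> borel_measurable M"
    and rotation: "\<And>u. cmod u = 1 \<Longrightarrow> distr M borel (\<lambda>\<omega>. u * Z \<omega>) = distr M borel Z"
    and nonzero: "AE \<omega> in M. Z \<omega> \<noteq> 0"
  shows "uniform_phase (distr M borel (\<lambda>\<omega>. sgn (Z \<omega>)))"
proof -
  have "distr (distr M borel (\<lambda>\<omega>. sgn (Z \<omega>))) borel ((*) u) = distr M borel (\<lambda>\<omega>. sgn (Z \<omega>))"
    if u: "cmod u = 1" for u
  proof -
    have "distr (distr M borel (\<lambda>\<omega>. sgn (Z \<omega>))) borel ((*) u) = distr (distr M borel (\<lambda>\<omega>. u * Z \<omega>)) borel sgn"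
      using u by (simp add: distr_distr comp_def complex_sgn_def norm_mult)
    then show ?thesis
      by (simp add: rotation[OF u] distr_distr comp_def)
  qed
  moreover have "AE z in distr M borel (\<lambda>\<omega>. sgn (Z \<omega>)). cmod z = 1"
    using nonzero by (subst AE_distr_iff) (auto simp: norm_sgn)
  ultimately show ?thesis
    by (simp add: uniform_phase_def prob_space_distr)
qed

lemma distr_envelope_uniform_phase:
  fixes N :: "('b \<times> complex) measure" and K :: "'b measure"
  assumes sets_N: "sets N = sets (K \<Otimes>\<^sub>M borel)" and "prob_space N" and G: "uniform_phase G"
    and rotation: "\<And>u. cmod u = 1 \<Longrightarrow> distr N (K \<Otimes>\<^sub>M borel) (\<lambda>(a, z). (a, u * z)) = N"
  shows "distr (distr N (K \<Otimes>\<^sub>M borel) (\<lambda>(a, z). (a, cmod z)) \<Otimes>\<^sub>M G) (K \<Otimes>\<^sub>M borel)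
      (\<lambda>((a, r), w). (a, complex_of_real r * w)) = N"
proof -
  interpret N: prob_space N by fact
  interpret G: prob_space G using G by (simp add: uniform_phase_def)
  let ?C = "K \<Otimes>\<^sub>M borel :: ('b \<times> complex) measure"
  have sets_G: "sets G = sets borel"
    using G by (simp add: uniform_phase_def)
  have measurable_NG: "measurable (N \<Otimes>\<^sub>M G) = measurable (?C \<Otimes>\<^sub>M borel)"
    by (intro ext measurable_cong_sets sets_pair_measure_cong) (simp_all add: sets_N sets_G)
  have measurable_KG: "measurable ((K \<Otimes>\<^sub>M borel) \<Otimes>\<^sub>M G) = measurable ((K \<Otimes>\<^sub>M borel) \<Otimes>\<^sub>M borel)"
    by (intro ext measurable_cong_sets sets_pair_measure_cong) (simp_all add: sets_G)
  have "distr (distr N (K \<Otimes>\<^sub>M borel) (\<lambda>(a, z). (a, cmod z)) \<Otimes>\<^sub>M G) ?C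
      (\<lambda>((a, r), w). (a, complex_of_real r * w))
    = distr (N \<Otimes>\<^sub>M G) ?C (\<lambda>((a, z), w). (a, complex_of_real (cmod z) * w))"
    by (subst G.distr_pair_measure_distr_fst)
      (simp_all add: measurable_cong_sets[OF sets_N refl] measurable_KG split_beta')
  also have "\<dots> = distr (N \<Otimes>\<^sub>M G) ?C (\<lambda>((a, z), w). (a, z * w))"
  proof (rule G.distr_pair_measure_fiberwise_eq, goal_cases)
    case (3 x)
    then obtain a z where x: "x = (a, z)" and "a \<in> space K"
      using sets_eq_imp_space_eq[OF sets_N] by (auto simp: space_pair_measure)
    then have "Pair a \<in> measurable borel ?C"
      by measurable
    then show ?case
      using uniform_phase_distr_mult[OF G, of "Pair a" _ z] by (simp add: x)
  qed (simp_all add: measurable_NG split_beta')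
  also have "\<dots> = N"
  proof (rule G.distr_pair_measure_invariant, goal_cases)
    case 4
    have "distr N ?C (\<lambda>x. (fst x, snd x * w)) = N" if "cmod w = 1" for w
      using rotation[OF that] by (simp add: mult.commute split_beta')
    moreover have "AE w in G. cmod w = 1"
      using G by (simp add: uniform_phase_def)
    ultimately show ?case
      by (auto simp: split_beta')
  qed (simp_all add: N.sigma_finite_measure_axioms sets_N measurable_NG split_beta')
  finally show ?thesis .
qed

section \<open>Sufficient statistics preserve Kullback-Leibler divergence\<close>

text \<open>
  \<open>T\<close> is sufficient for \<open>{P, Q}\<close>: both measures are recovered from their images \<open>P'\<close>, \<open>Q'\<close>
  under \<open>T\<close> by one and the same Markov kernel, realised by \<open>S\<close> with auxiliary randomness \<open>G\<close>
  and supported on the fibres of \<open>T\<close>.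
\<close>
locale sufficient_statistic =
  fixes Q P :: "'a measure" and Q' P' :: "'b measure" and G :: "'c measure"
    and T :: "'a \<Rightarrow> 'b" and S :: "'b \<times> 'c \<Rightarrow> 'a"
  assumes finite_Q: "finite_measure Q" and prob_G: "prob_space G" and sets_P: "sets P = sets Q"
    and T: "T \<in> measurable Q Q'" and S: "S \<in> measurable (Q' \<Otimes>\<^sub>M G) Q"
    and P': "P' = distr P Q' T" and Q': "Q' = distr Q Q' T"
    and P: "P = distr (P' \<Otimes>\<^sub>M G) Q S" and Q: "Q = distr (Q' \<Otimes>\<^sub>M G) Q S"
    and T_S: "AE x in Q' \<Otimes>\<^sub>M G. T (S x) = fst x"
begin

lemma sets_P': "sets P' = sets Q'"
  by (subst P') simp

lemma finite_Q': "finite_measure Q'"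
  by (subst Q') (rule finite_measure.finite_measure_distr[OF finite_Q T])

lemma T_P: "T \<in> measurable P Q'"
  using T by (simp add: measurable_cong_sets[OF sets_P refl])

lemma density_comp_T:
  assumes f: "f \<in> borel_measurable Q'" and "density Q' f = P'"
  shows "density Q (\<lambda>x. f (T x)) = P"
proof -
  interpret G: prob_space G by (rule prob_G)
  have fT: "(\<lambda>x. f (T x)) \<in> borel_measurable Q"
    using f T by measurable
  have "density Q (\<lambda>x. f (T x)) = distr (density (Q' \<Otimes>\<^sub>M G) (\<lambda>x. f (T (S x)))) Q S"
    by (subst Q) (rule density_distr[OF fT S])
  also have "density (Q' \<Otimes>\<^sub>M G) (\<lambda>x. f (T (S x))) = density (Q' \<Otimes>\<^sub>M G) (\<lambda>(y, w). f y * 1)"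
    using fT S f T_S by (intro density_cong) auto
  also have "\<dots> = density Q' f \<Otimes>\<^sub>M density G (\<lambda>_. 1)"
    using f by (intro pair_measure_density[symmetric]) (auto simp: density_1 intro: G.sigma_finite_measure_axioms)
  also have "\<dots> = P' \<Otimes>\<^sub>M G"
    by (simp add: assms(2) density_1)
  finally show ?thesis
    by (simp add: P[symmetric])
qed

lemma absolutely_continuous_P':
  assumes "absolutely_continuous Q P"
  shows "absolutely_continuous Q' P'"
  unfolding absolutely_continuous_def
proof
  fix A assume "A \<in> null_sets Q'"
  then have "A \<in> sets Q'" and "T -` A \<inter> space Q \<in> null_sets Q"
    using null_sets_distr_iff[OF T] Q' by auto
  then have "T -` A \<inter> space P \<in> null_sets P"
    using assms sets_eq_imp_space_eq[OF sets_P] by (auto simp: absolutely_continuous_def)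
  then show "A \<in> null_sets P'"
    using null_sets_distr_iff[OF T_P] \<open>A \<in> sets Q'\<close> P' by auto
qed

lemma AE_RN_deriv_comp_T: "AE x in P. RN_deriv Q P x = RN_deriv Q' P' (T x)"
proof (cases "\<exists>f. f \<in> borel_measurable Q' \<and> density Q' f = P'")
  case True
  interpret Q: finite_measure Q by (rule finite_Q)
  interpret Q': finite_measure Q' by (rule finite_Q')
  obtain f where f: "f \<in> borel_measurable Q'" and density_f: "density Q' f = P'"
    using True by blast
  have fT: "(\<lambda>x. f (T x)) \<in> borel_measurable Q"
    using f T by measurable
  have density_fT: "density Q (\<lambda>x. f (T x)) = P"
    using f density_f by (rule density_comp_T)
  have "AE x in P. f (T x) = RN_deriv Q P x"
    using Q.RN_deriv_unique[OF fT density_fT]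
    unfolding density_fT[symmetric] by (subst AE_density[OF fT]) auto
  moreover have "AE y in P'. f y = RN_deriv Q' P' y"
    using Q'.RN_deriv_unique[OF f density_f]
    unfolding density_f[symmetric] by (subst AE_density[OF f]) auto
  then have "AE x in P. f (T x) = RN_deriv Q' P' (T x)"
    unfolding P' using f by (subst (asm) AE_distr_iff[OF T_P]) (auto simp: sets_P')
  ultimately show ?thesis
    by auto
next
  case False
  interpret Q': finite_measure Q' by (rule finite_Q')
  have "\<not> (\<exists>g. g \<in> borel_measurable Q \<and> density Q g = P)"
  proof
    assume "\<exists>g. g \<in> borel_measurable Q \<and> density Q g = P"
    then have "absolutely_continuous Q P"
      by (auto intro: absolutely_continuousI_density)
    then obtain f where "f \<in> borel_measurable Q'" "density Q' f = P'"
      using Q'.Radon_Nikodym[of P'] absolutely_continuous_P' sets_P' by auto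
    with False show False by blast
  qed
  then have "RN_deriv Q P = (\<lambda>_. 0)"
    unfolding RN_deriv_def by auto
  moreover have "RN_deriv Q' P' = (\<lambda>_. 0)"
    using False unfolding RN_deriv_def by auto
  ultimately show ?thesis
    by simp
qed

lemma KL_divergence_eq: "KL_divergence b Q P = KL_divergence b Q' P'"
proof -
  have "KL_divergence b Q P = (\<integral>x. log b (enn2real (RN_deriv Q' P' (T x))) \<partial>P)"
    unfolding KL_divergence_def entropy_density_def comp_def using AE_RN_deriv_comp_T T_P
    by (intro integral_cong_AE) (auto simp: measurable_cong_sets[OF sets_P refl])
  also have "\<dots> = KL_divergence b Q' P'"
    unfolding KL_divergence_def entropy_density_def comp_def P'
    by (rule integral_distr[symmetric, OF T_P]) simp
  finally show ?thesis .
qed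

end

lemma KL_divergence_distr_inverse:
  assumes "finite_measure Q" and sets_P: "sets P = sets Q"
    and f: "f \<in> measurable Q N" and g: "g \<in> measurable N Q"
    and g_f: "\<And>x. x \<in> space Q \<Longrightarrow> g (f x) = x" and f_g: "\<And>y. y \<in> space N \<Longrightarrow> f (g y) = y"
  shows "KL_divergence b (distr Q N f) (distr P N f) = KL_divergence b Q P"
proof -
  let ?G = "return (count_space UNIV) ()"
  interpret G: prob_space ?G
    by (rule prob_space_return) simp
  have g': "g \<in> measurable (distr X N f) Q" for X
    using g by (simp add: measurable_cong_sets[OF sets_distr refl])
  have S: "(\<lambda>(y, _). g y) \<in> measurable (distr Q N f \<Otimes>\<^sub>M ?G) Q"
    using measurable_comp[OF measurable_fst g'] by (simp add: comp_def split_beta')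
  \<comment> \<open>with trivial auxiliary randomness, an invertible map is a sufficient statistic\<close>
  have recover: "X = distr (distr X N f \<Otimes>\<^sub>M ?G) Q (\<lambda>(y, _). g y)" if X: "sets X = sets Q" for X
  proof -
    have fX: "f \<in> measurable X N"
      using f by (simp add: measurable_cong_sets[OF X refl])
    have "distr (distr X N f \<Otimes>\<^sub>M ?G) Q (\<lambda>(y, _). g y) = distr (distr (distr X N f \<Otimes>\<^sub>M ?G) (distr X N f) fst) Q g"
      by (subst distr_distr[OF g' measurable_fst]) (simp_all add: comp_def split_beta')
    also have "\<dots> = distr X Q (\<lambda>x. g (f x))"
      using distr_distr[OF g fX] by (simp add: G.distr_pair_fst comp_def)
    also have "\<dots> = distr X Q (\<lambda>x. x)"
      using g_f sets_eq_imp_space_eq[OF X] by (intro distr_cong) auto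
    also have "\<dots> = X"
      by (rule distr_id2) (simp add: X)
    finally show ?thesis ..
  qed
  interpret sufficient_statistic Q P "distr Q N f" "distr P N f" ?G f "\<lambda>(y, _). g y"
  proof (rule sufficient_statistic.intro)
    show "finite_measure Q" "sets P = sets Q" by fact+
    show "prob_space ?G" by (rule G.prob_space_axioms)
    show "f \<in> measurable Q (distr Q N f)"
      using f by (simp add: measurable_cong_sets[OF refl sets_distr])
    show "(\<lambda>(y, _). g y) \<in> measurable (distr Q N f \<Otimes>\<^sub>M ?G) Q" by (rule S)
    show "distr P N f = distr P (distr Q N f) f" "distr Q N f = distr Q (distr Q N f) f"
      by (simp_all cong: distr_cong)
    show "P = distr (distr P N f \<Otimes>\<^sub>M ?G) Q (\<lambda>(y, _). g y)"
      using sets_P by (rule recover)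
    show "Q = distr (distr Q N f \<Otimes>\<^sub>M ?G) Q (\<lambda>(y, _). g y)"
      by (rule recover) simp
    show "AE x in distr Q N f \<Otimes>\<^sub>M ?G. f (case x of (y, _) \<Rightarrow> g y) = fst x"
      using f_g by (intro AE_I2) (auto simp: space_pair_measure)
  qed
  show ?thesis
    by (rule KL_divergence_eq[symmetric])
qed

lemma (in prob_space) mutual_information_commute:
  assumes X: "random_variable S X" and Y: "random_variable T Y"
  shows "mutual_information b S T X Y = mutual_information b T S Y X"
proof -
  let ?swap = "\<lambda>(x, y). (y, x)"
  interpret X: prob_space "distr M S X" by (rule prob_space_distr[OF X])
  interpret Y: prob_space "distr M T Y" by (rule prob_space_distr[OF Y])
  interpret XY: pair_prob_space "distr M S X" "distr M T Y" ..
  interpret YX: pair_prob_space "distr M T Y" "distr M S X" ..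
  have "distr (distr M S X \<Otimes>\<^sub>M distr M T Y) (T \<Otimes>\<^sub>M S) ?swap
      = distr (distr M S X \<Otimes>\<^sub>M distr M T Y) (distr M T Y \<Otimes>\<^sub>M distr M S X) ?swap"
    by (rule distr_cong) simp_all
  also have "\<dots> = distr M T Y \<Otimes>\<^sub>M distr M S X"
    by (rule YX.distr_pair_swap[symmetric])
  finally have "distr (distr M S X \<Otimes>\<^sub>M distr M T Y) (T \<Otimes>\<^sub>M S) ?swap = distr M T Y \<Otimes>\<^sub>M distr M S X" .
  moreover have "distr (distr M (S \<Otimes>\<^sub>M T) (\<lambda>x. (X x, Y x))) (T \<Otimes>\<^sub>M S) ?swap = distr M (T \<Otimes>\<^sub>M S) (\<lambda>x. (Y x, X x))"
    using X Y by (subst distr_distr) (auto simp: comp_def)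
  moreover have "KL_divergence b (distr (distr M S X \<Otimes>\<^sub>M distr M T Y) (T \<Otimes>\<^sub>M S) ?swap)
      (distr (distr M (S \<Otimes>\<^sub>M T) (\<lambda>x. (X x, Y x))) (T \<Otimes>\<^sub>M S) ?swap)
    = KL_divergence b (distr M S X \<Otimes>\<^sub>M distr M T Y) (distr M (S \<Otimes>\<^sub>M T) (\<lambda>x. (X x, Y x)))"
  proof (rule KL_divergence_distr_inverse)
    show "finite_measure (distr M S X \<Otimes>\<^sub>M distr M T Y)"
      by (rule XY.finite_measure_axioms)
    have sets_XY: "sets (distr M S X \<Otimes>\<^sub>M distr M T Y) = sets (S \<Otimes>\<^sub>M T)"
      by (intro sets_pair_measure_cong) simp_all
    show "?swap \<in> measurable (distr M S X \<Otimes>\<^sub>M distr M T Y) (T \<Otimes>\<^sub>M S)"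
      unfolding measurable_cong_sets[OF sets_XY refl] by measurable
    show "?swap \<in> measurable (T \<Otimes>\<^sub>M S) (distr M S X \<Otimes>\<^sub>M distr M T Y)"
      unfolding measurable_cong_sets[OF refl sets_XY] by measurable
    show "sets (distr M (S \<Otimes>\<^sub>M T) (\<lambda>x. (X x, Y x))) = sets (distr M S X \<Otimes>\<^sub>M distr M T Y)"
      by (simp add: sets_XY)
  qed (auto simp: space_pair_measure)
  ultimately show ?thesis
    by (simp add: mutual_information_def)
qed

section \<open>The envelope is a sufficient statistic\<close>

lemma AE_envelope_phase:
  fixes N :: "('b \<times> real) measure" and K :: "'b measure"
  assumes "prob_space N" and sets_N: "sets N = sets (K \<Otimes>\<^sub>M borel)" and nonneg: "AE x in N. snd x \<ge> 0"
    and G: "uniform_phase G"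
  shows "AE x in N \<Otimes>\<^sub>M G. (\<lambda>(a, z). (a, cmod z)) ((\<lambda>((a, r), w). (a, complex_of_real r * w)) x) = fst x"
proof -
  interpret N: prob_space N by fact
  interpret G: prob_space G
    using G by (simp add: uniform_phase_def)
  interpret NG: pair_sigma_finite N G ..
  have sets_NG: "sets (N \<Otimes>\<^sub>M G) = sets ((K \<Otimes>\<^sub>M borel) \<Otimes>\<^sub>M borel)"
    using G by (intro sets_pair_measure_cong) (simp_all add: sets_N uniform_phase_def)
  have "AE x in N \<Otimes>\<^sub>M G. snd (fst x) \<ge> 0 \<and> cmod (snd x) = 1"
  proof (rule NG.AE_pair_measure)
    show "{x \<in> space (N \<Otimes>\<^sub>M G). snd (fst x) \<ge> 0 \<and> cmod (snd x) = 1} \<in> sets (N \<Otimes>\<^sub>M G)"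
      unfolding sets_NG sets_eq_imp_space_eq[OF sets_NG] by measurable
    have "AE w in G. cmod w = 1"
      using G by (simp add: uniform_phase_def)
    with nonneg show "AE x in N. AE w in G. snd (fst (x, w)) \<ge> 0 \<and> cmod (snd (x, w)) = 1"
      by auto
  qed
  then show ?thesis
    by eventually_elim (auto simp: norm_mult)
qed

lemma envelope_sufficient_statistic:
  fixes Q P :: "('b \<times> complex) measure" and K :: "'b measure"
  assumes sets_Q: "sets Q = sets (K \<Otimes>\<^sub>M borel)" and sets_P: "sets P = sets (K \<Otimes>\<^sub>M borel)"
    and "prob_space Q" and "prob_space P" and G: "uniform_phase G"
    and rotation_Q: "\<And>u. cmod u = 1 \<Longrightarrow> distr Q (K \<Otimes>\<^sub>M borel) (\<lambda>(a, z). (a, u * z)) = Q"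
    and rotation_P: "\<And>u. cmod u = 1 \<Longrightarrow> distr P (K \<Otimes>\<^sub>M borel) (\<lambda>(a, z). (a, u * z)) = P"
  shows "sufficient_statistic Q P
    (distr Q (K \<Otimes>\<^sub>M borel) (\<lambda>(a, z). (a, cmod z))) (distr P (K \<Otimes>\<^sub>M borel) (\<lambda>(a, z). (a, cmod z)))
    G (\<lambda>(a, z). (a, cmod z)) (\<lambda>((a, r), w). (a, complex_of_real r * w))"
    (is "sufficient_statistic Q P ?Q' ?P' G ?T ?S")
proof (rule sufficient_statistic.intro)
  interpret Q: prob_space Q by fact
  have T: "?T \<in> measurable Q (K \<Otimes>\<^sub>M borel)"
    unfolding measurable_cong_sets[OF sets_Q refl] by simp
  show "finite_measure Q" "sets P = sets Q" "prob_space G"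
    using G by (simp_all add: sets_P sets_Q uniform_phase_def)
  show "?T \<in> measurable Q ?Q'"
    using T by simp
  have "measurable (?Q' \<Otimes>\<^sub>M G) Q = measurable ((K \<Otimes>\<^sub>M borel) \<Otimes>\<^sub>M borel) (K \<Otimes>\<^sub>M borel)"
    using G by (intro measurable_cong_sets sets_pair_measure_cong) (simp_all add: sets_Q uniform_phase_def)
  then show "?S \<in> measurable (?Q' \<Otimes>\<^sub>M G) Q"
    unfolding split_beta' by simp
  show "?P' = distr P ?Q' ?T" "?Q' = distr Q ?Q' ?T"
    by (simp_all cong: distr_cong)
  show "P = distr (?P' \<Otimes>\<^sub>M G) Q ?S"
    using distr_envelope_uniform_phase[OF sets_P \<open>prob_space P\<close> G rotation_P]
    by (simp add: sets_Q cong: distr_cong)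
  show "Q = distr (?Q' \<Otimes>\<^sub>M G) Q ?S"
    using distr_envelope_uniform_phase[OF sets_Q \<open>prob_space Q\<close> G rotation_Q]
    by (simp add: sets_Q cong: distr_cong)
  show "AE x in ?Q' \<Otimes>\<^sub>M G. ?T (?S x) = fst x"
    using T G by (intro AE_envelope_phase Q.prob_space_distr) (simp_all add: AE_distr_iff split_beta')
qed

lemma (in prob_space) mutual_information_envelope:
  fixes Z :: "'a \<Rightarrow> complex"
  assumes A: "random_variable K A" and Z: "random_variable borel Z" and G: "uniform_phase G"
    and rotation: "\<And>u. cmod u = 1 \<Longrightarrow> distr (distr M (K \<Otimes>\<^sub>M borel) (\<lambda>\<omega>. (A \<omega>, Z \<omega>))) (K \<Otimes>\<^sub>M borel)
      (\<lambda>(a, z). (a, u * z)) = distr M (K \<Otimes>\<^sub>M borel) (\<lambda>\<omega>. (A \<omega>, Z \<omega>))"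
  shows "mutual_information b K borel A Z = mutual_information b K borel A (\<lambda>\<omega>. cmod (Z \<omega>))"
proof -
  let ?P = "distr M (K \<Otimes>\<^sub>M borel) (\<lambda>\<omega>. (A \<omega>, Z \<omega>))" and ?Q = "distr M K A \<Otimes>\<^sub>M distr M borel Z"
  let ?T = "\<lambda>(a, z). (a, cmod z)"
  interpret A: prob_space "distr M K A" by (rule prob_space_distr[OF A])
  interpret Z: prob_space "distr M borel Z" by (rule prob_space_distr[OF Z])
  interpret AZ: pair_prob_space "distr M K A" "distr M borel Z" ..
  have [measurable]: "(\<lambda>\<omega>. (A \<omega>, Z \<omega>)) \<in> measurable M (K \<Otimes>\<^sub>M borel)"
    using A Z by measurable
  have rotation_Z: "distr (distr M borel Z) borel ((*) u) = distr M borel Z" if "cmod u = 1" for u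
  proof -
    have "distr (distr M borel Z) borel ((*) u) = distr (distr ?P (K \<Otimes>\<^sub>M borel) (\<lambda>(a, z). (a, u * z))) borel snd"
      using Z by (simp add: distr_distr comp_def split_beta')
    then show ?thesis
      using Z by (simp add: rotation[OF that] distr_distr comp_def)
  qed
  have pair_distr: "distr ?Q (K \<Otimes>\<^sub>M borel) (\<lambda>(a, z). (a, f z)) = distr M K A \<Otimes>\<^sub>M distr (distr M borel Z) borel f"
    if f: "f \<in> borel_measurable borel" and "sigma_finite_measure (distr (distr M borel Z) borel f)" for f :: "complex \<Rightarrow> 'c::topological_space"
    using pair_measure_distr[of "\<lambda>x. x" "distr M K A" K f "distr M borel Z" borel] that
    by (simp add: distr_id2 measurable_cong_sets[OF sets_distr refl])
  interpret sufficient_statistic ?Q ?P "distr ?Q (K \<Otimes>\<^sub>M borel) ?T" "distr ?P (K \<Otimes>\<^sub>M borel) ?T" G ?T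
    "\<lambda>((a, r), w). (a, complex_of_real r * w)"
  proof (rule envelope_sufficient_statistic)
    show "distr ?Q (K \<Otimes>\<^sub>M borel) (\<lambda>(a, z). (a, u * z)) = ?Q" if "cmod u = 1" for u
      using pair_distr[of "(*) u"] rotation_Z[OF that] Z.sigma_finite_measure_axioms by simp
  qed (simp_all add: G rotation prob_space_distr AZ.prob_space_axioms)
  have "distr (distr M borel Z) borel cmod = distr M borel (\<lambda>\<omega>. cmod (Z \<omega>))"
    using Z by (simp add: distr_distr comp_def)
  moreover have "sigma_finite_measure (distr M borel (\<lambda>\<omega>. cmod (Z \<omega>)))"
    using Z by (intro prob_space_imp_sigma_finite prob_space_distr) simp
  ultimately have "distr ?Q (K \<Otimes>\<^sub>M borel) ?T = distr M K A \<Otimes>\<^sub>M distr M borel (\<lambda>\<omega>. cmod (Z \<omega>))"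
    using pair_distr[of cmod] by simp
  moreover have "distr ?P (K \<Otimes>\<^sub>M borel) ?T = distr M (K \<Otimes>\<^sub>M borel) (\<lambda>\<omega>. (A \<omega>, cmod (Z \<omega>)))"
    by (simp add: distr_distr comp_def)
  ultimately show ?thesis
    using KL_divergence_eq by (simp add: mutual_information_def)
qed

lemma (in prob_space) indep_vars_mutual_information_envelope:
  assumes indep: "indep_vars (\<lambda>_. borel) X I" and I: "i \<in> I" "j \<in> I" "k \<in> I"
    and law: "\<And>l u. l \<in> I \<Longrightarrow> cmod u = 1 \<Longrightarrow> distr M borel (\<lambda>\<omega>. u * X l \<omega>) = distr M borel (X l)"
    and G: "uniform_phase G"
  shows "mutual_information b borel borel (\<lambda>\<omega>. cmod (X i \<omega> + X j \<omega>)) (\<lambda>\<omega>. X i \<omega> + X k \<omega>)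
    = mutual_information b borel borel (\<lambda>\<omega>. cmod (X i \<omega> + X j \<omega>)) (\<lambda>\<omega>. cmod (X i \<omega> + X k \<omega>))"
proof (rule mutual_information_envelope[OF _ _ G])
  have [measurable]: "X l \<in> borel_measurable M" if "l \<in> I" for l
    using indep that by (auto simp: indep_vars_def)
  show "random_variable borel (\<lambda>\<omega>. cmod (X i \<omega> + X j \<omega>))" "random_variable borel (\<lambda>\<omega>. X i \<omega> + X k \<omega>)"
    using I by measurable
  fix u :: complex assume "cmod u = 1"
  let ?F = "\<lambda>x. (cmod (x i + x j), x i + x k)"
  have "distr (distr M (borel \<Otimes>\<^sub>M borel) (\<lambda>\<omega>. ?F (\<lambda>l\<in>I. X l \<omega>))) (borel \<Otimes>\<^sub>M borel) (\<lambda>(a, z). (a, u * z))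
      = distr M (borel \<Otimes>\<^sub>M borel) (\<lambda>\<omega>. ?F (\<lambda>l\<in>I. X l \<omega>))"
  proof (rule indep_vars_distr_equivariant[OF indep])
    show "?F \<in> measurable (\<Pi>\<^sub>M l\<in>I. borel) (borel \<Otimes>\<^sub>M borel)"
      using I by measurable
    show "(\<lambda>(a, z). (a, u * z)) (?F x) = ?F (\<lambda>l\<in>I. u * x l)" for x
      using I \<open>cmod u = 1\<close> by (simp add: distrib_left[symmetric] norm_mult)
  qed (use I law \<open>cmod u = 1\<close> in auto)
  then show "distr (distr M (borel \<Otimes>\<^sub>M borel) (\<lambda>\<omega>. (cmod (X i \<omega> + X j \<omega>), X i \<omega> + X k \<omega>)))
      (borel \<Otimes>\<^sub>M borel) (\<lambda>(a, z). (a, u * z))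
    = distr M (borel \<Otimes>\<^sub>M borel) (\<lambda>\<omega>. (cmod (X i \<omega> + X j \<omega>), X i \<omega> + X k \<omega>))"
    using I by simp
qed

theorem proposition4:
  fixes M :: "'a measure" and H W\<^sub>A W\<^sub>B :: "'a \<Rightarrow> complex"
    and p \<sigma>\<^sub>A\<^sub>2 \<sigma>\<^sub>B\<^sub>2 :: real
  assumes "prob_space M"
    and "p > 0" and "\<sigma>\<^sub>A\<^sub>2 > 0" and "\<sigma>\<^sub>B\<^sub>2 > 0"
    and "ZMCSCG M p H" and "ZMCSCG M \<sigma>\<^sub>A\<^sub>2 W\<^sub>A" and "ZMCSCG M \<sigma>\<^sub>B\<^sub>2 W\<^sub>B"
    and "prob_space.indep_vars M (\<lambda>_. borel)
           (\<lambda>i::nat. if i = 0 then H else if i = 1 then W\<^sub>A else W\<^sub>B) {0, 1, 2}"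
  shows "prob_space.mutual_information M 2 borel borel
           (\<lambda>\<omega>. cmod (H \<omega> + W\<^sub>A \<omega>)) (\<lambda>\<omega>. H \<omega> + W\<^sub>B \<omega>)
         = prob_space.mutual_information M 2 borel borel
           (\<lambda>\<omega>. cmod (H \<omega> + W\<^sub>A \<omega>)) (\<lambda>\<omega>. cmod (H \<omega> + W\<^sub>B \<omega>))
       \<and> prob_space.mutual_information M 2 borel borel
           (\<lambda>\<omega>. H \<omega> + W\<^sub>A \<omega>) (\<lambda>\<omega>. cmod (H \<omega> + W\<^sub>B \<omega>))
         = prob_space.mutual_information M 2 borel borel
           (\<lambda>\<omega>. cmod (H \<omega> + W\<^sub>A \<omega>)) (\<lambda>\<omega>. cmod (H \<omega> + W\<^sub>B \<omega>))"
proof -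
  interpret prob_space M by fact
  let ?X = "\<lambda>i::nat. if i = 0 then H else if i = 1 then W\<^sub>A else W\<^sub>B"
  have [measurable]: "H \<in> borel_measurable M" "W\<^sub>A \<in> borel_measurable M" "W\<^sub>B \<in> borel_measurable M"
    using assms(5-7) by (auto intro: ZMCSCG_distr(2))
  have rotation: "distr M borel (\<lambda>\<omega>. u * ?X i \<omega>) = distr M borel (?X i)" if "cmod u = 1" for u i
    using ZMCSCG_distr_rotation[OF _ that] assms(5-7) by auto
  have phase: "uniform_phase (distr M borel (\<lambda>\<omega>. sgn (H \<omega>)))"
    using assms(5) by (intro uniform_phase_distr_sgn ZMCSCG_distr_rotation ZMCSCG_AE_nonzero) simp_all
  have envelope: "mutual_information 2 borel borel (\<lambda>\<omega>. cmod (H \<omega> + ?X j \<omega>)) (\<lambda>\<omega>. H \<omega> + ?X k \<omega>)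
      = mutual_information 2 borel borel (\<lambda>\<omega>. cmod (H \<omega> + ?X j \<omega>)) (\<lambda>\<omega>. cmod (H \<omega> + ?X k \<omega>))"
    if "j \<in> {1, 2}" "k \<in> {1, 2}" for j k
    using indep_vars_mutual_information_envelope[OF assms(8), of 0 j k] that rotation phase by simp
  have "mutual_information 2 borel borel (\<lambda>\<omega>. H \<omega> + W\<^sub>A \<omega>) (\<lambda>\<omega>. cmod (H \<omega> + W\<^sub>B \<omega>))
      = mutual_information 2 borel borel (\<lambda>\<omega>. cmod (H \<omega> + W\<^sub>B \<omega>)) (\<lambda>\<omega>. H \<omega> + W\<^sub>A \<omega>)"
    by (rule mutual_information_commute) simp_all
  also have "\<dots> = mutual_information 2 borel borel (\<lambda>\<omega>. cmod (H \<omega> + W\<^sub>B \<omega>)) (\<lambda>\<omega>. cmod (H \<omega> + W\<^sub>A \<omega>))"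
    using envelope[of 2 1] by simp
  also have "\<dots> = mutual_information 2 borel borel (\<lambda>\<omega>. cmod (H \<omega> + W\<^sub>A \<omega>)) (\<lambda>\<omega>. cmod (H \<omega> + W\<^sub>B \<omega>))"
    by (rule mutual_information_commute) simp_all
  finally show ?thesis
    using envelope[of 1 2] by simp
qed

end
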